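(* Consider $N\ge 2$ users indexed by $\mathcal{U}=\{1,\dots,N\}$ with fixed channel power gains $h_1,\dots,h_N>0$, noise variance $\eta>0$, target throughputs $\theta_1,\dots,\theta_N>0$, and strategy sets $\mathcal{P}^i=[0,P_i^{max}]$ with $P_i^{max}>0$. For $\mathbf{P}\in\prod_i\mathcal{P}^i$ let $r_i(\mathbf{P})=\log_2\!\big(1+\frac{h_iP_i}{\eta+\sum_{j\neq i}h_jP_j}\big)$, and let $\mathcal{S}$ be the set of profiles with $r_i(\mathbf{P})\ge\theta_i$ for all $i$. Suppose $\mathcal{S}\neq\emptyset$. Then an efficient satisfaction equilibrium $\mathbf{P}^+$ (a minimizer of $\sum_iP_i$ over $\mathcal{S}$) exists and is satisfactory Pareto optimal: for every $i\in\mathcal{U}$ and every $p\in\mathcal{P}^i$ with $r_i(p,\mathbf{P}^+_{-i})>r_i(\mathbf{P}^+)$, there exists $j\neq i$ with $r_j(p,\mathbf{P}^+_{-i})<\theta_j$.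
   Context: $(p,\mathbf{P}^+_{-i})$ denotes the profile obtained from $\mathbf{P}^+$ by replacing user $i$'s power with $p$. Satisfactory Pareto optimality means that no player can increase its payoff (by changing its own power) without dissatisfying (pushing below its target) some of its opponents. *)

theory Defs
  imports Complex_Main
begin

text \<open>Users are indexed by {1..N}; a power profile is a function nat => real,
  only its values on {1..N} matter.\<close>

definition throughput :: "nat \<Rightarrow> (nat \<Rightarrow> real) \<Rightarrow> real \<Rightarrow> (nat \<Rightarrow> real) \<Rightarrow> nat \<Rightarrow> real" where
  "throughput N h \<eta> P i =
     log 2 (1 + h i * P i / (\<eta> + (\<Sum>j\<in>{1..N} - {i}. h j * P j)))"

definition feasible_profile :: "nat \<Rightarrow> (nat \<Rightarrow> real) \<Rightarrow> (nat \<Rightarrow> real) \<Rightarrow> bool" where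
  "feasible_profile N Pmax P \<longleftrightarrow> (\<forall>i\<in>{1..N}. 0 \<le> P i \<and> P i \<le> Pmax i)"

definition satisfaction_set ::
  "nat \<Rightarrow> (nat \<Rightarrow> real) \<Rightarrow> real \<Rightarrow> (nat \<Rightarrow> real) \<Rightarrow> (nat \<Rightarrow> real) \<Rightarrow> (nat \<Rightarrow> real) set" where
  "satisfaction_set N h \<eta> \<theta> Pmax =
     {P. feasible_profile N Pmax P \<and> (\<forall>i\<in>{1..N}. throughput N h \<eta> P i \<ge> \<theta> i)}"

definition efficient_SE ::
  "nat \<Rightarrow> (nat \<Rightarrow> real) \<Rightarrow> real \<Rightarrow> (nat \<Rightarrow> real) \<Rightarrow> (nat \<Rightarrow> real) \<Rightarrow> (nat \<Rightarrow> real) \<Rightarrow> bool" where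
  "efficient_SE N h \<eta> \<theta> Pmax P \<longleftrightarrow>
     P \<in> satisfaction_set N h \<eta> \<theta> Pmax \<and>
     (\<forall>Q\<in>satisfaction_set N h \<eta> \<theta> Pmax. (\<Sum>i\<in>{1..N}. P i) \<le> (\<Sum>i\<in>{1..N}. Q i))"

definition satisfactory_pareto_optimal ::
  "nat \<Rightarrow> (nat \<Rightarrow> real) \<Rightarrow> real \<Rightarrow> (nat \<Rightarrow> real) \<Rightarrow> (nat \<Rightarrow> real) \<Rightarrow> (nat \<Rightarrow> real) \<Rightarrow> bool" where
  "satisfactory_pareto_optimal N h \<eta> \<theta> Pmax P \<longleftrightarrow>
     (\<forall>i\<in>{1..N}. \<forall>p. 0 \<le> p \<and> p \<le> Pmax i \<longrightarrow>
        throughput N h \<eta> (P(i := p)) i > throughput N h \<eta> P i \<longrightarrow>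
        (\<exists>j\<in>{1..N}. j \<noteq> i \<and> throughput N h \<eta> (P(i := p)) j < \<theta> j))"

end

theory Submission
  imports Defs
begin

text \<open>Writing \<open>a\<^sub>i = 1 - 1 / 2 powr \<theta>\<^sub>i\<close> and \<open>T(P) = \<Sum>\<^sub>j h\<^sub>j P\<^sub>j\<close>, the target of user \<open>i\<close> is met
  iff \<open>h\<^sub>i P\<^sub>i \<ge> a\<^sub>i (\<eta> + T(P))\<close>, a linear constraint. Summing over all users gives
  \<open>T(P) \<ge> A \<eta> / (1 - A)\<close> with \<open>A = \<Sum>\<^sub>i a\<^sub>i < 1\<close>, and the profile meeting every constraint
  with equality at this total is componentwise below every satisfying profile; hence it is the
  unique efficient satisfaction equilibrium. In it every user is exactly at its target, so a user
  raising its own throughput must raise its power, which raises \<open>T\<close> and pushes every other user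
  below its target.\<close>

definition received_power :: "nat \<Rightarrow> (nat \<Rightarrow> real) \<Rightarrow> (nat \<Rightarrow> real) \<Rightarrow> real" where
  "received_power N h P = (\<Sum>j\<in>{1..N}. h j * P j)"

definition target_share :: "real \<Rightarrow> real" where
  "target_share t = 1 - 1 / 2 powr t"

lemma target_share_pos: "t > 0 \<Longrightarrow> target_share t > 0"
  by (simp add: target_share_def)

lemma received_power_nonneg:
  assumes "\<forall>j\<in>{1..N}. 0 < h j" and "\<forall>j\<in>{1..N}. 0 \<le> P j"
  shows "received_power N h P \<ge> 0"
  unfolding received_power_def using assms by (intro sum_nonneg) (simp add: less_imp_le)

lemma received_power_split:
  assumes "i \<in> {1..N}"
  shows "received_power N h P = h i * P i + (\<Sum>j\<in>{1..N} - {i}. h j * P j)"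
  unfolding received_power_def using assms by (simp add: sum.remove)

lemma received_power_update:
  assumes "i \<in> {1..N}"
  shows "received_power N h (P(i := p)) = received_power N h P + h i * (p - P i)"
proof -
  have "(\<Sum>j\<in>{1..N} - {i}. h j * (P(i := p)) j) = (\<Sum>j\<in>{1..N} - {i}. h j * P j)"
    by (intro sum.cong) auto
  then show ?thesis
    using received_power_split[OF assms, of h P] received_power_split[OF assms, of h "P(i := p)"]
    by (simp add: algebra_simps)
qed

lemma throughput_ge_iff:
  assumes i: "i \<in> {1..N}" and gains: "\<forall>j\<in>{1..N}. 0 < h j" and "\<eta> > 0"
    and nonneg: "\<forall>j\<in>{1..N}. 0 \<le> P j"
  shows "throughput N h \<eta> P i \<ge> t \<longleftrightarrow> h i * P i \<ge> target_share t * (\<eta> + received_power N h P)"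
proof -
  define D where "D = \<eta> + (\<Sum>j\<in>{1..N} - {i}. h j * P j)"
  define x where "x = h i * P i"
  define c where "c = (2::real) powr t"
  have c: "c > 0" unfolding c_def by simp
  have "(\<Sum>j\<in>{1..N} - {i}. h j * P j) \<ge> 0"
    using nonneg gains by (intro sum_nonneg) (simp add: less_imp_le)
  then have D: "D > 0" unfolding D_def using \<open>\<eta> > 0\<close> by linarith
  have x: "x \<ge> 0" unfolding x_def using nonneg gains i by (simp add: less_imp_le)
  have total: "\<eta> + received_power N h P = D + x"
    unfolding D_def x_def using received_power_split[OF i] by simp
  have "throughput N h \<eta> P i \<ge> t \<longleftrightarrow> c \<le> 1 + x / D"
    unfolding throughput_def c_def D_def[symmetric] x_def[symmetric]
    using le_log_iff[of 2 "1 + x / D" t] x D by (simp add: add_pos_nonneg)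
  also have "\<dots> \<longleftrightarrow> (c - 1) * (D + x) \<le> c * x"
    using D by (simp add: field_simps)
  also have "\<dots> \<longleftrightarrow> (1 - 1 / c) * (D + x) \<le> x"
    using c mult_le_cancel_left_pos[OF c, of "(1 - 1 / c) * (D + x)" x]
    by (simp add: field_simps)
  finally show ?thesis unfolding total target_share_def c_def x_def .
qed

lemma throughput_update_le:
  assumes i: "i \<in> {1..N}" and gains: "\<forall>j\<in>{1..N}. 0 < h j" and "\<eta> > 0"
    and nonneg: "\<forall>j\<in>{1..N}. 0 \<le> P j" and p: "0 \<le> p" "p \<le> P i"
  shows "throughput N h \<eta> (P(i := p)) i \<le> throughput N h \<eta> P i"
proof -
  define D where "D = \<eta> + (\<Sum>j\<in>{1..N} - {i}. h j * P j)"
  have others: "(\<Sum>j\<in>{1..N} - {i}. h j * (P(i := p)) j) = (\<Sum>j\<in>{1..N} - {i}. h j * P j)"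
    by (intro sum.cong) auto
  have "(\<Sum>j\<in>{1..N} - {i}. h j * P j) \<ge> 0"
    using nonneg gains by (intro sum_nonneg) (simp add: less_imp_le)
  then have D: "D > 0" unfolding D_def using \<open>\<eta> > 0\<close> by linarith
  have "h i * p \<le> h i * P i" using gains i p by simp
  then have le: "1 + h i * p / D \<le> 1 + h i * P i / D" using D by (simp add: divide_right_mono)
  have "h i * p / D \<ge> 0" using D p gains i by (simp add: less_imp_le)
  then show ?thesis
    unfolding throughput_def others D_def[symmetric] using le by simp
qed

locale satisfaction_game =
  fixes N :: nat and h \<theta> Pmax :: "nat \<Rightarrow> real" and \<eta> :: real
  assumes gains_pos: "\<forall>i\<in>{1..N}. 0 < h i"
    and noise_pos: "\<eta> > 0"
    and targets_pos: "\<forall>i\<in>{1..N}. 0 < \<theta> i"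
begin

abbreviation "S \<equiv> satisfaction_set N h \<eta> \<theta> Pmax"
abbreviation "T \<equiv> received_power N h"
abbreviation "a i \<equiv> target_share (\<theta> i)"

definition share_sum :: real where
  "share_sum = (\<Sum>i\<in>{1..N}. a i)"

definition min_total :: real where
  "min_total = share_sum * \<eta> / (1 - share_sum)"

definition min_profile :: "nat \<Rightarrow> real" where
  "min_profile j = (if j \<in> {1..N} then a j * (\<eta> + min_total) / h j else 0)"

lemma share_pos: "i \<in> {1..N} \<Longrightarrow> a i > 0"
  using targets_pos by (simp add: target_share_pos)

lemma satisfaction_set_iff:
  "P \<in> S \<longleftrightarrow> feasible_profile N Pmax P \<and> (\<forall>i\<in>{1..N}. h i * P i \<ge> a i * (\<eta> + T P))"
  unfolding satisfaction_set_def feasible_profile_def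
  using throughput_ge_iff[OF _ gains_pos noise_pos] by auto

lemma satisfaction_set_nonneg: "P \<in> S \<Longrightarrow> \<forall>j\<in>{1..N}. 0 \<le> P j"
  by (simp add: satisfaction_set_def feasible_profile_def)

lemma received_power_ge_shares: "P \<in> S \<Longrightarrow> share_sum * (\<eta> + T P) \<le> T P"
  unfolding share_sum_def sum_distrib_right received_power_def[of N h P]
  by (intro sum_mono) (simp add: satisfaction_set_iff received_power_def)

lemma share_sum_less_1:
  assumes "S \<noteq> {}"
  shows "share_sum < 1"
proof -
  obtain P where P: "P \<in> S" using assms by blast
  have "T P \<ge> 0"
    using received_power_nonneg[OF gains_pos satisfaction_set_nonneg[OF P]] .
  show ?thesis
  proof (rule ccontr)
    assume "\<not> share_sum < 1"
    then have "1 * (\<eta> + T P) \<le> share_sum * (\<eta> + T P)"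
      using \<open>T P \<ge> 0\<close> noise_pos by (intro mult_right_mono) auto
    then show False using received_power_ge_shares[OF P] noise_pos by simp
  qed
qed

lemma received_power_ge_min_total:
  assumes "P \<in> S"
  shows "T P \<ge> min_total"
proof -
  have "share_sum < 1" using share_sum_less_1 assms by blast
  moreover have "T P * (1 - share_sum) \<ge> share_sum * \<eta>"
    using received_power_ge_shares[OF assms] by (simp add: algebra_simps)
  ultimately show ?thesis
    unfolding min_total_def by (simp add: pos_divide_le_eq)
qed

lemma min_profile_gain:
  assumes "j \<in> {1..N}"
  shows "h j * min_profile j = a j * (\<eta> + min_total)"
proof -
  have "h j \<noteq> 0" using gains_pos assms by force
  then show ?thesis using assms by (simp add: min_profile_def)
qed

lemma received_power_min_profile:
  assumes "S \<noteq> {}"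
  shows "T min_profile = min_total"
proof -
  have "T min_profile = share_sum * (\<eta> + min_total)"
    unfolding received_power_def share_sum_def sum_distrib_right
    by (rule sum.cong) (auto simp: min_profile_gain)
  also have "\<dots> = min_total"
    using share_sum_less_1[OF assms] by (simp add: min_total_def field_simps)
  finally show ?thesis .
qed

lemma min_profile_le:
  assumes P: "P \<in> S" and i: "i \<in> {1..N}"
  shows "min_profile i \<le> P i"
proof -
  have "h i * min_profile i = a i * (\<eta> + min_total)" using min_profile_gain[OF i] .
  also have "\<dots> \<le> a i * (\<eta> + T P)"
    using received_power_ge_min_total[OF P] share_pos[OF i] by simp
  also have "\<dots> \<le> h i * P i" using P i by (simp add: satisfaction_set_iff)
  finally show ?thesis using gains_pos i by simp
qed

lemma min_profile_in_satisfaction_set: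
  assumes "S \<noteq> {}"
  shows "min_profile \<in> S"
proof -
  obtain P where P: "P \<in> S" using assms by blast
  have "share_sum \<ge> 0"
    unfolding share_sum_def using share_pos by (intro sum_nonneg) (simp add: less_imp_le)
  then have "min_total \<ge> 0"
    unfolding min_total_def using share_sum_less_1[OF assms] noise_pos by simp
  then have "0 \<le> min_profile j" if "j \<in> {1..N}" for j
  proof -
    have "h j > 0" using gains_pos that by blast
    then show ?thesis
      using \<open>min_total \<ge> 0\<close> that noise_pos share_pos[OF that] by (simp add: min_profile_def)
  qed
  moreover have "min_profile j \<le> Pmax j" if "j \<in> {1..N}" for j
  proof -
    have "P j \<le> Pmax j" using P that by (simp add: satisfaction_set_def feasible_profile_def)
    then show ?thesis using min_profile_le[OF P that] by linarith
  qed
  ultimately show ?thesis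
    by (simp add: satisfaction_set_iff feasible_profile_def min_profile_gain
        received_power_min_profile[OF assms])
qed

lemma efficient_SE_min_profile:
  "S \<noteq> {} \<Longrightarrow> efficient_SE N h \<eta> \<theta> Pmax min_profile"
  unfolding efficient_SE_def
  using min_profile_in_satisfaction_set min_profile_le by (auto intro: sum_mono)

lemma efficient_SE_eq_min_profile:
  assumes eff: "efficient_SE N h \<eta> \<theta> Pmax P" and j: "j \<in> {1..N}"
  shows "P j = min_profile j"
proof -
  have P: "P \<in> S" and "min_profile \<in> S"
    using eff min_profile_in_satisfaction_set by (auto simp: efficient_SE_def)
  then have "(\<Sum>i\<in>{1..N}. P i) \<le> (\<Sum>i\<in>{1..N}. min_profile i)"
    using eff by (simp add: efficient_SE_def)
  moreover have below: "\<forall>i\<in>{1..N}. min_profile i \<le> P i"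
    using min_profile_le[OF P] by blast
  moreover have "(\<Sum>i\<in>{1..N}. min_profile i) \<le> (\<Sum>i\<in>{1..N}. P i)"
    using below by (intro sum_mono) blast
  ultimately have "(\<Sum>i\<in>{1..N}. min_profile i) = (\<Sum>i\<in>{1..N}. P i)"
    by linarith
  then show ?thesis using sum_mono_inv[of min_profile "{1..N}" P j] below j by auto
qed

lemma efficient_SE_tight:
  assumes eff: "efficient_SE N h \<eta> \<theta> Pmax P"
  shows "\<forall>j\<in>{1..N}. h j * P j = a j * (\<eta> + T P)"
proof -
  have ne: "S \<noteq> {}" using eff by (auto simp: efficient_SE_def)
  have "T P = T min_profile"
    unfolding received_power_def using efficient_SE_eq_min_profile[OF eff] by simp
  then show ?thesis
    using efficient_SE_eq_min_profile[OF eff] min_profile_gain received_power_min_profile[OF ne]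
    by simp
qed

lemma tight_satisfactory_pareto_optimal:
  assumes "N \<ge> 2" and nonneg: "\<forall>j\<in>{1..N}. 0 \<le> P j"
    and tight: "\<forall>j\<in>{1..N}. h j * P j = a j * (\<eta> + T P)"
  shows "satisfactory_pareto_optimal N h \<eta> \<theta> Pmax P"
  unfolding satisfactory_pareto_optimal_def
proof (intro ballI allI impI)
  fix i p assume i: "i \<in> {1..N}" and p: "0 \<le> p \<and> p \<le> Pmax i"
    and gain: "throughput N h \<eta> (P(i := p)) i > throughput N h \<eta> P i"
  let ?Q = "P(i := p)"
  have "p > P i"
    using throughput_update_le[OF i gains_pos noise_pos nonneg] p gain by force
  then have more_power: "T ?Q > T P"
    using received_power_update[OF i] gains_pos i by simp
  obtain j where j: "j \<in> {1..N}" "j \<noteq> i"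
    using \<open>N \<ge> 2\<close> by (cases "i = 1") (auto intro: that[of 1] that[of 2])
  have "h j * ?Q j < a j * (\<eta> + T ?Q)"
    using tight j share_pos[OF j(1)] more_power by simp
  moreover have "\<forall>j\<in>{1..N}. 0 \<le> ?Q j" using nonneg p by simp
  ultimately have "throughput N h \<eta> ?Q j < \<theta> j"
    using throughput_ge_iff[OF j(1) gains_pos noise_pos] by (meson not_le)
  then show "\<exists>j\<in>{1..N}. j \<noteq> i \<and> throughput N h \<eta> ?Q j < \<theta> j"
    using j by blast
qed

end

theorem corollary2:
  fixes N :: nat and h \<theta> Pmax :: "nat \<Rightarrow> real" and \<eta> :: real
  assumes "N \<ge> 2"
    and "\<forall>i\<in>{1..N}. h i > 0"
    and "\<eta> > 0"
    and "\<forall>i\<in>{1..N}. \<theta> i > 0"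
    and "\<forall>i\<in>{1..N}. Pmax i > 0"
    and "satisfaction_set N h \<eta> \<theta> Pmax \<noteq> {}"
  shows "(\<exists>P. efficient_SE N h \<eta> \<theta> Pmax P) \<and>
         (\<forall>P. efficient_SE N h \<eta> \<theta> Pmax P \<longrightarrow> satisfactory_pareto_optimal N h \<eta> \<theta> Pmax P)"
proof -
  interpret satisfaction_game N h \<theta> Pmax \<eta>
    using assms by unfold_locales auto
  have "satisfactory_pareto_optimal N h \<eta> \<theta> Pmax P" if eff: "efficient_SE N h \<eta> \<theta> Pmax P" for P
    using tight_satisfactory_pareto_optimal[OF \<open>N \<ge> 2\<close> _ efficient_SE_tight[OF eff]]
      satisfaction_set_nonneg eff by (simp add: efficient_SE_def)
  then show ?thesis
    using efficient_SE_min_profile[OF assms(6)] by blast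
qed

end
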